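(* Let $\Lambda$ be the weight lattice of type ${\rm D}_4$, with $\mathbb{Z}$-basis of fundamental weights $\omega_1=e_1$, $\omega_2=e_1+e_2$, $\omega_3=\tfrac12(e_1+e_2+e_3-e_4)$, $\omega_4=\tfrac12(e_1+e_2+e_3+e_4)$ (inside $\mathbb{Q}^4$ with standard basis $e_1,\ldots,e_4$), let $W$ be the Weyl group of ${\rm D}_4$, and let $T^*\subset\Lambda$ be the sublattice of vectors with integer coordinates whose coordinate sum is even (the character lattice of the split maximal torus of $\mathbf{PGO}_8$). For $i=1,\ldots,4$ put $\rho_i=\sum_{\lambda\in W(\omega_i)}e^{\lambda}-|W(\omega_i)|\in\mathbb{Z}[\Lambda]$. If $f_1,\ldots,f_4\in\mathbb{Z}[\Lambda]$ satisfy $f_1\rho_1+f_2\rho_2+f_3\rho_3+f_4\rho_4\in\mathbb{Z}[T^*]$, then for each $i\in\{1,3,4\}$ the sum of all coefficients of $f_i$ is even.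
   Context: $W$ acts on $\mathbb{Q}^4$ by permutations of the coordinates and an even number of sign changes. $\mathbb{Z}[\Lambda]$ is the group ring of $\Lambda$ with basis $e^\lambda$, $\lambda\in\Lambda$. *)

theory Defs
  imports "HOL-Analysis.Analysis" "HOL-Library.Poly_Mapping"
begin

text \<open>Ambient space Q^4 (coordinates e_1..e_4 = positions 1..4 of vector).\<close>
type_synonym wt = "rat ^ 4"

definition omega1 :: wt where "omega1 = vector [1, 0, 0, 0]"
definition omega2 :: wt where "omega2 = vector [1, 1, 0, 0]"
definition omega3 :: wt where "omega3 = vector [1/2, 1/2, 1/2, -1/2]"
definition omega4 :: wt where "omega4 = vector [1/2, 1/2, 1/2, 1/2]"

definition D4_lattice :: "wt set" where
  "D4_lattice = {of_int a *s omega1 + of_int b *s omega2 + of_int c *s omega3 + of_int d *s omega4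
                 | a b c d :: int. True}"

definition D4_Weyl :: "(wt \<Rightarrow> wt) set" where
  "D4_Weyl = {(\<lambda>x. \<chi> i. of_int (s i) * x $ (\<sigma> i)) | \<sigma> (s :: 4 \<Rightarrow> int).
                 bij \<sigma> \<and> (\<forall>i. s i = 1 \<or> s i = -1) \<and> (\<Prod>i\<in>UNIV. s i) = 1}"

definition W_orbit :: "wt \<Rightarrow> wt set" where
  "W_orbit \<omega> = {w \<omega> | w. w \<in> D4_Weyl}"

text \<open>Group ring Z[Q^4] is the type of finitely supported maps; Z[S] consists of elements supported in S.\<close>
definition group_ring_on :: "wt set \<Rightarrow> (wt \<Rightarrow>\<^sub>0 int) set" where
  "group_ring_on S = {f. Poly_Mapping.keys f \<subseteq> S}"

definition rho :: "wt \<Rightarrow> (wt \<Rightarrow>\<^sub>0 int)" where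
  "rho \<omega> = (\<Sum>\<mu>\<in>W_orbit \<omega>. Poly_Mapping.single \<mu> 1) - of_nat (card (W_orbit \<omega>))"

definition T_star :: "wt set" where
  "T_star = {x. (\<forall>i. x $ i \<in> \<int>) \<and> (\<exists>k::int. (\<Sum>i\<in>UNIV. x $ i) = of_int (2 * k))}"

definition coeff_sum :: "(wt \<Rightarrow>\<^sub>0 int) \<Rightarrow> int" where
  "coeff_sum f = (\<Sum>\<mu>\<in>Poly_Mapping.keys f. Poly_Mapping.lookup f \<mu>)"

end

theory Submission
  imports Defs "HOL-Combinatorics.Transposition"
begin

text \<open>For e : \<Lambda> \<rightarrow> \<int> the pairing \<langle>e, g\<rangle> = \<Sum> g(\<mu>) e(\<mu>) is linear on \<int>[\<Lambda>], and
  \<langle>e, f \<rho>_\<omega>\<rangle> = \<langle>e_\<omega>, f\<rangle> with e_\<omega>(\<mu>) = \<Sum>_{\<nu> \<in> W \<omega>} (e(\<mu> + \<nu>) - e(\<mu>)). Take for e an integer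
  polynomial in the fundamental-weight coordinates of \<mu> reduced modulo 4, chosen so that modulo 16
  it vanishes on T*, while e_\<omega> is constantly 8 for \<omega> = \<omega>_i and constantly 0 for the other three
  fundamental weights. Pairing the hypothesis with e gives 8 \<epsilon>(f_i) \<equiv> 0 (mod 16), \<epsilon> being the
  coefficient sum. Once the four orbits are known explicitly, these conditions on e involve only
  finitely many residues and are checked by evaluation.\<close>

section \<open>Pairing group rings with functions\<close>

definition coeff_pairing :: "('a \<Rightarrow> int) \<Rightarrow> ('a \<Rightarrow>\<^sub>0 int) \<Rightarrow> int" where
  "coeff_pairing e g = (\<Sum>\<mu>\<in>Poly_Mapping.keys g. Poly_Mapping.lookup g \<mu> * e \<mu>)"

lemma coeff_pairing_eq_sum_superset:
  assumes "finite S" "Poly_Mapping.keys g \<subseteq> S"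
  shows "coeff_pairing e g = (\<Sum>\<mu>\<in>S. Poly_Mapping.lookup g \<mu> * e \<mu>)"
  unfolding coeff_pairing_def using assms
  by (intro sum.mono_neutral_left) (auto simp: in_keys_iff)

lemma coeff_pairing_add: "coeff_pairing e (g + h) = coeff_pairing e g + coeff_pairing e h"
proof -
  let ?S = "Poly_Mapping.keys g \<union> Poly_Mapping.keys h"
  have "Poly_Mapping.keys (g + h) \<subseteq> ?S"
    by (rule keys_add)
  then show ?thesis
    by (simp add: coeff_pairing_eq_sum_superset[of ?S] lookup_add distrib_right sum.distrib)
qed

lemma coeff_pairing_diff: "coeff_pairing e (g - h) = coeff_pairing e g - coeff_pairing e h"
proof -
  let ?S = "Poly_Mapping.keys g \<union> Poly_Mapping.keys h"
  have "Poly_Mapping.keys (g - h) \<subseteq> ?S"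
    by (rule keys_diff)
  then show ?thesis
    by (simp add: coeff_pairing_eq_sum_superset[of ?S] lookup_minus left_diff_distrib sum_subtractf)
qed

lemma coeff_pairing_single [simp]: "coeff_pairing e (Poly_Mapping.single x c) = c * e x"
  unfolding coeff_pairing_def by (cases "c = 0") auto

lemma coeff_pairing_zero [simp]: "coeff_pairing e 0 = 0"
  unfolding coeff_pairing_def by simp

lemma coeff_pairing_sum:
  "finite A \<Longrightarrow> coeff_pairing e (\<Sum>a\<in>A. g a) = (\<Sum>a\<in>A. coeff_pairing e (g a))"
  by (induction A rule: finite_induct) (simp_all add: coeff_pairing_add)

lemma coeff_sum_eq_coeff_pairing: "coeff_sum g = coeff_pairing (\<lambda>_. 1) g"
  by (simp add: coeff_sum_def coeff_pairing_def)

lemma coeff_pairing_single_mult: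
  fixes g :: "'a::monoid_add \<Rightarrow>\<^sub>0 int"
  shows "coeff_pairing e (frag_of x * g) = coeff_pairing (\<lambda>\<nu>. e (x + \<nu>)) g"
  using subset_UNIV
  by (induction g rule: frag_induction) (simp_all add: mult_single right_diff_distrib coeff_pairing_diff)

lemma coeff_pairing_mult:
  fixes f g :: "'a::monoid_add \<Rightarrow>\<^sub>0 int"
  shows "coeff_pairing e (f * g) = coeff_pairing (\<lambda>\<mu>. coeff_pairing (\<lambda>\<nu>. e (\<mu> + \<nu>)) g) f"
  using subset_UNIV
  by (induction f rule: frag_induction)
    (simp_all add: coeff_pairing_single_mult left_diff_distrib coeff_pairing_diff)

lemma coeff_pairing_mod_eq:
  assumes "Poly_Mapping.keys g \<subseteq> S" and "\<And>\<mu>. \<mu> \<in> S \<Longrightarrow> e \<mu> mod m = t mod m"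
  shows "coeff_pairing e g mod m = t * coeff_sum g mod m"
  using assms(1)
proof (induction g rule: frag_induction)
  case (one x)
  then show ?case
    by (simp add: coeff_sum_eq_coeff_pairing assms(2))
next
  case (diff a b)
  have "coeff_pairing e (a - b) mod m = (coeff_pairing e a mod m - coeff_pairing e b mod m) mod m"
    by (simp add: coeff_pairing_diff mod_diff_eq)
  also have "\<dots> = (t * coeff_sum a mod m - t * coeff_sum b mod m) mod m"
    using diff.IH by simp
  also have "\<dots> = t * coeff_sum (a - b) mod m"
    by (simp add: mod_diff_eq coeff_sum_eq_coeff_pairing coeff_pairing_diff right_diff_distrib)
  finally show ?case .
qed (simp add: coeff_sum_eq_coeff_pairing)

lemma coeff_pairing_rho:
  assumes "finite (W_orbit \<omega>)"
  shows "coeff_pairing e (rho \<omega>) = (\<Sum>\<nu>\<in>W_orbit \<omega>. e \<nu> - e 0)"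
proof -
  have "coeff_pairing e (of_nat n) = int n * e 0" for n
    by (metis coeff_pairing_single single_of_nat)
  then show ?thesis
    using assms by (simp add: rho_def coeff_pairing_diff coeff_pairing_sum sum_subtractf)
qed

section \<open>Weyl orbits of the fundamental weights\<close>

lemma vector_4 [simp]:
  "(vector [x, y, z, w] :: 'a::zero ^ 4) $ 1 = x"
  "(vector [x, y, z, w] :: 'a::zero ^ 4) $ 2 = y"
  "(vector [x, y, z, w] :: 'a::zero ^ 4) $ 3 = z"
  "(vector [x, y, z, w] :: 'a::zero ^ 4) $ 4 = w"
  unfolding vector_def by simp_all

lemma vec_4_eq_vector: "(x :: 'a::zero ^ 4) = vector [x $ 1, x $ 2, x $ 3, x $ 4]"
  by (simp add: vec_eq_iff forall_4)

lemma prod_4: "prod f (UNIV :: 4 set) = f 1 * f 2 * f 3 * f 4"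
  unfolding UNIV_4 by (simp add: ac_simps)

lemma W_orbitE:
  assumes "x \<in> W_orbit \<omega>"
  obtains \<sigma> s where "bij \<sigma>" "\<And>i. s i = 1 \<or> s i = (-1::int)" "(\<Prod>i\<in>UNIV. s i) = 1"
    "\<And>i. x $ i = of_int (s i) * \<omega> $ \<sigma> i"
proof -
  from assms obtain \<sigma> s where "bij \<sigma>" "\<forall>i. s i = 1 \<or> s i = (-1::int)" "(\<Prod>i\<in>UNIV. s i) = 1"
    "x = (\<chi> i. of_int (s i) * \<omega> $ \<sigma> i)"
    unfolding W_orbit_def D4_Weyl_def by blast
  then show thesis
    using that[of \<sigma> s] by simp
qed

lemma W_orbit_prod_sgn:
  assumes "x \<in> W_orbit \<omega>"
  shows "(\<Prod>i\<in>UNIV. sgn (x $ i)) = (\<Prod>i\<in>UNIV. sgn (\<omega> $ i))"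
proof -
  obtain \<sigma> s where \<sigma>: "bij \<sigma>" and s: "\<And>i. s i = 1 \<or> s i = (-1::int)" "(\<Prod>i\<in>UNIV. s i) = 1"
    and x: "\<And>i. x $ i = of_int (s i) * \<omega> $ \<sigma> i"
    using assms by (rule W_orbitE) blast
  have "sgn (x $ i) = of_int (s i) * sgn (\<omega> $ \<sigma> i)" for i
    using s(1)[of i] by (auto simp: x sgn_mult)
  then have "(\<Prod>i\<in>UNIV. sgn (x $ i)) = of_int (\<Prod>i\<in>UNIV. s i) * (\<Prod>i\<in>UNIV. sgn (\<omega> $ \<sigma> i))"
    by (simp add: prod.distrib)
  also have "(\<Prod>i\<in>UNIV. sgn (\<omega> $ \<sigma> i)) = (\<Prod>i\<in>UNIV. sgn (\<omega> $ i))"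
    using prod.reindex_bij_betw[of \<sigma> UNIV UNIV "\<lambda>i. sgn (\<omega> $ i)"] \<sigma> by (simp add: bij_def)
  finally show ?thesis
    using s(2) by simp
qed

lemma prod_sign_cases:
  assumes "\<And>i. s i = 1 \<or> s i = (-1::int)"
  shows "prod s A = 1 \<or> prod s A = -1"
proof (induction A rule: infinite_finite_induct)
  case (insert i A)
  then show ?case
    using assms[of i] by auto
qed auto

text \<open>An odd number of sign changes is allowed when it can be absorbed at a coordinate \<open>k\<close> where
  the permuted vector vanishes.\<close>
lemma W_orbit_memI_signs:
  assumes \<sigma>: "bij \<sigma>" and s: "\<And>i. s i = 1 \<or> s i = (-1::int)"
    and x: "\<And>i. x $ i = of_int (s i) * \<omega> $ \<sigma> i"
    and "prod s UNIV = 1 \<or> \<omega> $ \<sigma> k = 0"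
  shows "x \<in> W_orbit \<omega>"
proof -
  have prod_s: "prod s UNIV = 1 \<or> prod s UNIV = -1"
    by (rule prod_sign_cases) (rule s)
  define s' where "s' = s(k := s k * prod s UNIV)"
  have "prod s' UNIV = prod s UNIV * prod s UNIV"
    by (simp add: s'_def prod.remove[of UNIV k] mult_ac)
  then have "prod s' UNIV = 1"
    using prod_s by auto
  moreover have "s' i = 1 \<or> s' i = -1" for i
    using s[of i] s[of k] prod_s by (auto simp: s'_def)
  moreover have "x = (\<chi> i. of_int (s' i) * \<omega> $ \<sigma> i)"
    using x assms(4) by (auto simp: vec_eq_iff s'_def)
  ultimately show ?thesis
    unfolding W_orbit_def D4_Weyl_def using \<sigma> by force
qed

lemma W_orbit_memI:
  assumes \<sigma>: "bij \<sigma>" and abs_eq: "\<forall>i. \<bar>x $ i\<bar> = \<bar>\<omega> $ \<sigma> i\<bar>"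
    and sgn_eq: "(\<Prod>i\<in>UNIV. sgn (x $ i)) = (\<Prod>i\<in>UNIV. sgn (\<omega> $ i))"
  shows "x \<in> W_orbit \<omega>"
proof -
  define s :: "4 \<Rightarrow> int" where "s i = (if x $ i = \<omega> $ \<sigma> i then 1 else -1)" for i
  have s_sign: "s i = 1 \<or> s i = -1" for i
    by (simp add: s_def)
  have x: "x $ i = of_int (s i) * \<omega> $ \<sigma> i" for i
    using abs_eq by (auto simp: s_def abs_eq_iff)
  show ?thesis
  proof (cases "\<exists>k. \<omega> $ \<sigma> k = 0")
    case True
    then show ?thesis
      using W_orbit_memI_signs[OF \<sigma> s_sign x] by blast
  next
    case False
    have "of_int (s i) = sgn (x $ i) * sgn (\<omega> $ \<sigma> i)" for i
      using False x[of i] s_sign[of i] by (auto simp: sgn_mult)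
    then have "of_int (prod s UNIV) = (\<Prod>i\<in>UNIV. sgn (x $ i)) * (\<Prod>i\<in>UNIV. sgn (\<omega> $ \<sigma> i))"
      by (simp add: prod.distrib)
    also have "(\<Prod>i\<in>UNIV. sgn (\<omega> $ \<sigma> i)) = (\<Prod>i\<in>UNIV. sgn (\<omega> $ i))"
      using prod.reindex_bij_betw[of \<sigma> UNIV UNIV "\<lambda>i. sgn (\<omega> $ i)"] \<sigma> by (simp add: bij_def)
    also have "(\<Prod>i\<in>UNIV. sgn (x $ i)) * \<dots> = (\<Prod>i\<in>UNIV. sgn (\<omega> $ i) * sgn (\<omega> $ i))"
      by (simp only: sgn_eq prod.distrib)
    also have "\<dots> = 1"
    proof (rule prod.neutral, intro ballI)
      fix i
      obtain k where "\<sigma> k = i"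
        using \<sigma> by (metis bij_pointE)
      then show "sgn (\<omega> $ i) * sgn (\<omega> $ i) = 1"
        using False by (auto simp: sgn_if)
    qed
    finally have "prod s UNIV = 1"
      by (simp only: of_int_eq_1_iff)
    then show ?thesis
      using W_orbit_memI_signs[OF \<sigma> s_sign x] by blast
  qed
qed

lemma omega1_eq_axis: "omega1 = axis 1 1"
  by (simp add: omega1_def vec_eq_iff forall_4 axis_def)

lemma omega2_eq_axis: "omega2 = axis 1 1 + axis 2 1"
  by (simp add: omega2_def vec_eq_iff forall_4 axis_def)

definition omega1_orbit :: "wt list" where
  "omega1_orbit = [axis j \<epsilon>. j \<leftarrow> [1, 2, 3, 4], \<epsilon> \<leftarrow> [1, -1]]"

definition omega2_orbit :: "wt list" where
  "omega2_orbit = [axis j \<epsilon> + axis k \<delta>.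
     (j, k) \<leftarrow> [(1, 2), (1, 3), (1, 4), (2, 3), (2, 4), (3, 4)], \<epsilon> \<leftarrow> [1, -1], \<delta> \<leftarrow> [1, -1]]"

definition omega3_orbit :: "wt list" where
  "omega3_orbit =
    [vector [-1/2, -1/2, -1/2, 1/2], vector [-1/2, -1/2, 1/2, -1/2],
     vector [-1/2, 1/2, -1/2, -1/2], vector [-1/2, 1/2, 1/2, 1/2],
     vector [1/2, -1/2, -1/2, -1/2], vector [1/2, -1/2, 1/2, 1/2],
     vector [1/2, 1/2, -1/2, 1/2], vector [1/2, 1/2, 1/2, -1/2]]"

definition omega4_orbit :: "wt list" where
  "omega4_orbit =
    [vector [-1/2, -1/2, -1/2, -1/2], vector [-1/2, -1/2, 1/2, 1/2],
     vector [-1/2, 1/2, -1/2, 1/2], vector [-1/2, 1/2, 1/2, -1/2],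
     vector [1/2, -1/2, -1/2, 1/2], vector [1/2, -1/2, 1/2, -1/2],
     vector [1/2, 1/2, -1/2, -1/2], vector [1/2, 1/2, 1/2, 1/2]]"

lemma axis_mem_W_orbit_omega1:
  assumes "\<epsilon> = 1 \<or> \<epsilon> = -1"
  shows "axis j \<epsilon> \<in> W_orbit omega1"
proof (rule W_orbit_memI)
  show "bij (Transposition.transpose 1 j)"
    by simp
  show "\<forall>i. \<bar>axis j \<epsilon> $ i\<bar> = \<bar>omega1 $ Transposition.transpose 1 j i\<bar>"
    using assms by (auto simp: omega1_eq_axis axis_def transpose_eq_iff)
  show "(\<Prod>i\<in>UNIV. sgn (axis j \<epsilon> $ i)) = (\<Prod>i\<in>UNIV. sgn (omega1 $ i))"
    using exhaust_4[of j] by (auto simp: prod_4 omega1_def axis_def)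
qed

lemma axis_add_axis_mem_W_orbit_omega2:
  assumes "j \<noteq> k" "\<epsilon> = 1 \<or> \<epsilon> = -1" "\<delta> = 1 \<or> \<delta> = -1"
  shows "axis j \<epsilon> + axis k \<delta> \<in> W_orbit omega2"
proof (rule W_orbit_memI)
  define \<sigma> where "\<sigma> = Transposition.transpose 2 (Transposition.transpose 1 j k) \<circ> Transposition.transpose 1 j"
  show "bij \<sigma>"
    by (simp add: \<sigma>_def bij_comp)
  have "Transposition.transpose 1 j k \<noteq> 1"
    using assms(1) by (auto simp: transpose_eq_iff)
  then have "\<sigma> j = 1" "\<sigma> k = 2"
    by (simp_all add: \<sigma>_def)
  then have "\<sigma> i = 1 \<longleftrightarrow> i = j" "\<sigma> i = 2 \<longleftrightarrow> i = k" for i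
    using bij_is_inj[OF \<open>bij \<sigma>\<close>] by (metis injD)+
  then show "\<forall>i. \<bar>(axis j \<epsilon> + axis k \<delta>) $ i\<bar> = \<bar>omega2 $ \<sigma> i\<bar>"
    using assms by (auto simp: omega2_eq_axis axis_def)
  show "(\<Prod>i\<in>UNIV. sgn ((axis j \<epsilon> + axis k \<delta>) $ i)) = (\<Prod>i\<in>UNIV. sgn (omega2 $ i))"
    using exhaust_4[of j] exhaust_4[of k] by (auto simp: prod_4 omega2_def axis_def)
qed

lemma W_orbit_omega1: "W_orbit omega1 = set omega1_orbit"
proof
  show "W_orbit omega1 \<subseteq> set omega1_orbit"
  proof
    fix x assume "x \<in> W_orbit omega1"
    then obtain \<sigma> s where \<sigma>: "bij \<sigma>" and s: "\<And>i. s i = 1 \<or> s i = -1"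
      and x: "\<And>i. x $ i = of_int (s i) * omega1 $ \<sigma> i"
      by (rule W_orbitE) blast
    obtain m where "\<sigma> m = 1"
      using \<sigma> by (metis bij_pointE)
    then have "\<sigma> i = 1 \<longleftrightarrow> i = m" for i
      using bij_is_inj[OF \<sigma>] by (metis injD)
    then have "x = axis m (of_int (s m))"
      using x by (simp add: vec_eq_iff axis_def omega1_eq_axis)
    then show "x \<in> set omega1_orbit"
      using exhaust_4[of m] s[of m] by (auto simp: omega1_orbit_def)
  qed
  show "set omega1_orbit \<subseteq> W_orbit omega1"
    by (auto simp: omega1_orbit_def intro: axis_mem_W_orbit_omega1)
qed

lemma W_orbit_omega2: "W_orbit omega2 = set omega2_orbit"
proof
  show "W_orbit omega2 \<subseteq> set omega2_orbit"
  proof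
    fix x assume "x \<in> W_orbit omega2"
    then obtain \<sigma> s where \<sigma>: "bij \<sigma>" and s: "\<And>i. s i = 1 \<or> s i = -1"
      and x: "\<And>i. x $ i = of_int (s i) * omega2 $ \<sigma> i"
      by (rule W_orbitE) blast
    obtain m n where "\<sigma> m = 1" "\<sigma> n = 2"
      using \<sigma> by (metis bij_pointE)
    then have \<sigma>_eq: "\<sigma> i = 1 \<longleftrightarrow> i = m" "\<sigma> i = 2 \<longleftrightarrow> i = n" for i
      using bij_is_inj[OF \<sigma>] by (metis injD)+
    have "m \<noteq> n"
      using \<open>\<sigma> m = 1\<close> \<open>\<sigma> n = 2\<close> by auto
    have "x = axis m (of_int (s m)) + axis n (of_int (s n))"
      using x \<sigma>_eq \<open>m \<noteq> n\<close> by (auto simp: vec_eq_iff axis_def omega2_eq_axis)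
    then show "x \<in> set omega2_orbit"
      using exhaust_4[of m] exhaust_4[of n] s[of m] s[of n] \<open>m \<noteq> n\<close>
      by (auto simp: omega2_orbit_def add.commute)
  qed
  show "set omega2_orbit \<subseteq> W_orbit omega2"
    by (auto simp: omega2_orbit_def intro: axis_add_axis_mem_W_orbit_omega2)
qed

lemma W_orbit_half_spinE:
  assumes "x \<in> W_orbit \<omega>" "\<And>i. \<bar>\<omega> $ i\<bar> = 1/2"
  obtains a b c d where "x = vector [a, b, c, d]" "a = 1/2 \<or> a = -1/2" "b = 1/2 \<or> b = -1/2"
    "c = 1/2 \<or> c = -1/2" "d = 1/2 \<or> d = -1/2"
    "sgn a * sgn b * sgn c * sgn d = (\<Prod>i\<in>UNIV. sgn (\<omega> $ i))"
proof -
  obtain \<sigma> s where "\<And>i. s i = 1 \<or> s i = (-1::int)" "\<And>i. x $ i = of_int (s i) * \<omega> $ \<sigma> i"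
    using assms(1) by (rule W_orbitE) blast
  then have abs_x: "\<bar>x $ i\<bar> = 1/2" for i
    using assms(2)[of "\<sigma> i"] by (metis abs_minus_cancel mult_minus_left mult_1 of_int_1 of_int_minus)
  have "x $ i = 1/2 \<or> x $ i = -1/2" for i
    using abs_x[of i] by (cases "x $ i < 0") auto
  then show thesis
    using W_orbit_prod_sgn[OF assms(1)] by (intro that[of "x $ 1" "x $ 2" "x $ 3" "x $ 4"])
      (simp_all add: prod_4 flip: vec_4_eq_vector)
qed

lemma W_orbit_omega3: "W_orbit omega3 = set omega3_orbit"
proof
  have abs_omega3: "\<bar>omega3 $ i\<bar> = 1/2" for i
    using exhaust_4[of i] by (auto simp: omega3_def)
  show "W_orbit omega3 \<subseteq> set omega3_orbit"
  proof
    fix x assume "x \<in> W_orbit omega3"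
    then show "x \<in> set omega3_orbit"
      using abs_omega3 by (rule W_orbit_half_spinE)
        (elim disjE; simp add: omega3_orbit_def omega3_def prod_4)
  qed
  show "set omega3_orbit \<subseteq> W_orbit omega3"
    unfolding omega3_orbit_def
    by (simp; intro conjI; rule W_orbit_memI[where \<sigma> = id]; simp add: forall_4 prod_4 omega3_def)
qed

lemma W_orbit_omega4: "W_orbit omega4 = set omega4_orbit"
proof
  have abs_omega4: "\<bar>omega4 $ i\<bar> = 1/2" for i
    using exhaust_4[of i] by (auto simp: omega4_def)
  show "W_orbit omega4 \<subseteq> set omega4_orbit"
  proof
    fix x assume "x \<in> W_orbit omega4"
    then show "x \<in> set omega4_orbit"
      using abs_omega4 by (rule W_orbit_half_spinE)
        (elim disjE; simp add: omega4_orbit_def omega4_def prod_4)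
  qed
  show "set omega4_orbit \<subseteq> W_orbit omega4"
    unfolding omega4_orbit_def
    by (simp; intro conjI; rule W_orbit_memI[where \<sigma> = id]; simp add: forall_4 prod_4 omega4_def)
qed

section \<open>Test functions periodic in fundamental-weight coordinates\<close>

text \<open>If x = a \<omega>1 + b \<omega>2 + c \<omega>3 + d \<omega>4 then (a, b, c, d) = (x1 - x2, x2 - x3, x3 - x4, x3 + x4); the
  floors only make the map total.\<close>
definition fw_coords :: "wt \<Rightarrow> int \<times> int \<times> int \<times> int" where
  "fw_coords x = (\<lfloor>x $ 1 - x $ 2\<rfloor>, \<lfloor>x $ 2 - x $ 3\<rfloor>, \<lfloor>x $ 3 - x $ 4\<rfloor>, \<lfloor>x $ 3 + x $ 4\<rfloor>)"

lemma D4_lattice_coordsE: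
  assumes "x \<in> D4_lattice"
  obtains a b c d :: int where "x $ 1 - x $ 2 = of_int a" "x $ 2 - x $ 3 = of_int b"
    "x $ 3 - x $ 4 = of_int c" "x $ 3 + x $ 4 = of_int d"
proof -
  from assms obtain a b c d :: int
    where "x = of_int a *s omega1 + of_int b *s omega2 + of_int c *s omega3 + of_int d *s omega4"
    unfolding D4_lattice_def by blast
  then show thesis
    by (intro that[of a b c d]) (simp_all add: omega1_def omega2_def omega3_def omega4_def field_simps)
qed

lemma fw_coords_add:
  assumes "\<mu> \<in> D4_lattice"
  shows "fw_coords (\<mu> + \<nu>) = fw_coords \<mu> + fw_coords \<nu>"
proof -
  obtain a b c d :: int where coords: "\<mu> $ 1 - \<mu> $ 2 = of_int a" "\<mu> $ 2 - \<mu> $ 3 = of_int b"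
      "\<mu> $ 3 - \<mu> $ 4 = of_int c" "\<mu> $ 3 + \<mu> $ 4 = of_int d"
    using assms by (rule D4_lattice_coordsE)
  have shifted: "(\<mu> + \<nu>) $ 1 - (\<mu> + \<nu>) $ 2 = of_int a + (\<nu> $ 1 - \<nu> $ 2)"
      "(\<mu> + \<nu>) $ 2 - (\<mu> + \<nu>) $ 3 = of_int b + (\<nu> $ 2 - \<nu> $ 3)"
      "(\<mu> + \<nu>) $ 3 - (\<mu> + \<nu>) $ 4 = of_int c + (\<nu> $ 3 - \<nu> $ 4)"
      "(\<mu> + \<nu>) $ 3 + (\<mu> + \<nu>) $ 4 = of_int d + (\<nu> $ 3 + \<nu> $ 4)"
    by (simp_all flip: coords)
  have floor_shift: "\<lfloor>of_int k + r\<rfloor> = k + \<lfloor>r\<rfloor>" for k and r :: rat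
    by (metis add.commute floor_add_int)
  show ?thesis
    by (simp only: fw_coords_def shifted floor_shift) (simp add: coords)
qed

lemma T_star_fw_coords_parity:
  assumes "\<mu> \<in> T_star" "fw_coords \<mu> = (a, b, c, d)"
  shows "even (a + c)" "even (c + d)"
proof -
  obtain k k1 k2 k3 k4 :: int where "\<mu> $ 1 = of_int k1" "\<mu> $ 2 = of_int k2" "\<mu> $ 3 = of_int k3"
      "\<mu> $ 4 = of_int k4" "\<mu> $ 1 + \<mu> $ 2 + \<mu> $ 3 + \<mu> $ 4 = of_int (2 * k)"
    using assms(1) unfolding T_star_def by (auto simp: sum_4) (metis Ints_cases)
  then have "k1 + k2 + k3 + k4 = 2 * k" "a = k1 - k2" "c = k3 - k4" "d = k3 + k4"
    using assms(2) by (auto simp: fw_coords_def simp flip: of_int_add of_int_diff)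
  then show "even (a + c)" "even (c + d)"
    by presburger+
qed

definition residue_test :: "(int \<Rightarrow> int \<Rightarrow> int \<Rightarrow> int \<Rightarrow> int) \<Rightarrow> wt \<Rightarrow> int" where
  "residue_test P x = (case fw_coords x of (a, b, c, d) \<Rightarrow> P (a mod 4) (b mod 4) (c mod 4) (d mod 4))"

text \<open>The value of e_\<omega> at a lattice point with fundamental-weight coordinates \<equiv> (a, b, c, d)
  modulo 4, where K lists the orbit of \<omega> in fundamental-weight coordinates.\<close>
definition orbit_defect ::
    "(int \<Rightarrow> int \<Rightarrow> int \<Rightarrow> int \<Rightarrow> int) \<Rightarrow> (int \<times> int \<times> int \<times> int) list \<Rightarrow>
      int \<Rightarrow> int \<Rightarrow> int \<Rightarrow> int \<Rightarrow> int" where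
  "orbit_defect P K a b c d =
     (\<Sum>(k1, k2, k3, k4)\<leftarrow>K.
        P ((a + k1) mod 4) ((b + k2) mod 4) ((c + k3) mod 4) ((d + k4) mod 4) - P a b c d)"

lemma coeff_pairing_rho_residue_test:
  assumes "W_orbit \<omega> = set L" "distinct (map fw_coords L)" "\<mu> \<in> D4_lattice" "fw_coords \<mu> = (a, b, c, d)"
  shows "coeff_pairing (\<lambda>\<nu>. residue_test P (\<mu> + \<nu>)) (rho \<omega>)
    = orbit_defect P (map fw_coords L) (a mod 4) (b mod 4) (c mod 4) (d mod 4)"
proof -
  have "distinct L"
    using assms(2) by (simp add: distinct_map)
  have shift: "residue_test P (\<mu> + \<nu>) = (case fw_coords \<nu> of (k1, k2, k3, k4) \<Rightarrow>
      P ((a mod 4 + k1) mod 4) ((b mod 4 + k2) mod 4) ((c mod 4 + k3) mod 4) ((d mod 4 + k4) mod 4))" for \<nu>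
    using assms(3,4) by (simp add: residue_test_def fw_coords_add mod_add_left_eq split: prod.split)
  have "coeff_pairing (\<lambda>\<nu>. residue_test P (\<mu> + \<nu>)) (rho \<omega>) = (\<Sum>\<nu>\<leftarrow>L. residue_test P (\<mu> + \<nu>) - residue_test P \<mu>)"
    using \<open>distinct L\<close> by (simp add: coeff_pairing_rho assms(1) sum_list_distinct_conv_sum_set)
  also have "\<dots> = orbit_defect P (map fw_coords L) (a mod 4) (b mod 4) (c mod 4) (d mod 4)"
    unfolding orbit_defect_def map_map o_def shift
    using assms(4) by (simp add: residue_test_def case_prod_beta)
  finally show ?thesis .
qed

lemma coeff_pairing_residue_test_mult_rho_mod:
  assumes "f \<in> group_ring_on D4_lattice" "W_orbit \<omega> = set L" "distinct (map fw_coords L)"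
    and "\<And>a b c d. a \<in> {0..<4} \<Longrightarrow> b \<in> {0..<4} \<Longrightarrow> c \<in> {0..<4} \<Longrightarrow> d \<in> {0..<4} \<Longrightarrow>
      orbit_defect P (map fw_coords L) a b c d mod m = t mod m"
  shows "coeff_pairing (residue_test P) (f * rho \<omega>) mod m = t * coeff_sum f mod m"
  unfolding coeff_pairing_mult
proof (rule coeff_pairing_mod_eq)
  show "Poly_Mapping.keys f \<subseteq> D4_lattice"
    using assms(1) by (simp add: group_ring_on_def)
  fix \<mu> assume "\<mu> \<in> D4_lattice"
  obtain a b c d where "fw_coords \<mu> = (a, b, c, d)"
    by (cases "fw_coords \<mu>") auto
  then show "coeff_pairing (\<lambda>\<nu>. residue_test P (\<mu> + \<nu>)) (rho \<omega>) mod m = t mod m"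
    using coeff_pairing_rho_residue_test[OF assms(2,3) \<open>\<mu> \<in> D4_lattice\<close>] assms(4) by simp
qed

lemma coeff_pairing_residue_test_T_star_mod:
  assumes "g \<in> group_ring_on T_star"
    and "\<And>a b c d. a \<in> {0..<4} \<Longrightarrow> b \<in> {0..<4} \<Longrightarrow> c \<in> {0..<4} \<Longrightarrow> d \<in> {0..<4} \<Longrightarrow>
      even (a + c) \<Longrightarrow> even (c + d) \<Longrightarrow> P a b c d mod m = 0"
  shows "coeff_pairing (residue_test P) g mod m = 0"
proof -
  have "coeff_pairing (residue_test P) g mod m = 0 * coeff_sum g mod m"
  proof (rule coeff_pairing_mod_eq)
    show "Poly_Mapping.keys g \<subseteq> T_star"
      using assms(1) by (simp add: group_ring_on_def)
    fix \<mu> assume "\<mu> \<in> T_star"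
    obtain a b c d where coords: "fw_coords \<mu> = (a, b, c, d)"
      by (cases "fw_coords \<mu>") auto
    have "even (a mod 4 + c mod 4)" "even (c mod 4 + d mod 4)"
      using T_star_fw_coords_parity[OF \<open>\<mu> \<in> T_star\<close> coords] by presburger+
    then show "residue_test P \<mu> mod m = 0 mod m"
      using assms(2)[of "a mod 4" "b mod 4" "c mod 4" "d mod 4"] by (simp add: residue_test_def coords)
  qed
  then show ?thesis
    by simp
qed

definition omega1_orbit_coords :: "(int \<times> int \<times> int \<times> int) list" where
  "omega1_orbit_coords = [(1, 0, 0, 0), (-1, 0, 0, 0), (-1, 1, 0, 0), (1, -1, 0, 0),
     (0, -1, 1, 1), (0, 1, -1, -1), (0, 0, -1, 1), (0, 0, 1, -1)]"

definition omega2_orbit_coords :: "(int \<times> int \<times> int \<times> int) list" where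
  "omega2_orbit_coords = [(0, 1, 0, 0), (2, -1, 0, 0), (-2, 1, 0, 0), (0, -1, 0, 0),
     (1, -1, 1, 1), (1, 1, -1, -1), (-1, -1, 1, 1), (-1, 1, -1, -1),
     (1, 0, -1, 1), (1, 0, 1, -1), (-1, 0, -1, 1), (-1, 0, 1, -1),
     (-1, 0, 1, 1), (-1, 2, -1, -1), (1, -2, 1, 1), (1, 0, -1, -1),
     (-1, 1, -1, 1), (-1, 1, 1, -1), (1, -1, -1, 1), (1, -1, 1, -1),
     (0, -1, 0, 2), (0, -1, 2, 0), (0, 1, -2, 0), (0, 1, 0, -2)]"

definition omega3_orbit_coords :: "(int \<times> int \<times> int \<times> int) list" where
  "omega3_orbit_coords = [(0, 0, -1, 0), (0, -1, 1, 0), (-1, 1, 0, -1), (-1, 0, 0, 1),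
     (1, 0, 0, -1), (1, -1, 0, 1), (0, 1, -1, 0), (0, 0, 1, 0)]"

definition omega4_orbit_coords :: "(int \<times> int \<times> int \<times> int) list" where
  "omega4_orbit_coords = [(0, 0, 0, -1), (0, -1, 0, 1), (-1, 1, -1, 0), (-1, 0, 1, 0),
     (1, 0, -1, 0), (1, -1, 1, 0), (0, 1, 0, -1), (0, 0, 0, 1)]"

lemma fw_coords_orbits:
  "map fw_coords omega1_orbit = omega1_orbit_coords"
  "map fw_coords omega2_orbit = omega2_orbit_coords"
  "map fw_coords omega3_orbit = omega3_orbit_coords"
  "map fw_coords omega4_orbit = omega4_orbit_coords"
  by (simp_all add: fw_coords_def axis_def omega1_orbit_def omega2_orbit_def omega3_orbit_def
      omega4_orbit_def omega1_orbit_coords_def omega2_orbit_coords_def omega3_orbit_coords_def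
      omega4_orbit_coords_def floor_minus)

lemma distinct_orbit_coords:
  "distinct omega1_orbit_coords" "distinct omega2_orbit_coords"
  "distinct omega3_orbit_coords" "distinct omega4_orbit_coords"
  by (simp_all add: omega1_orbit_coords_def omega2_orbit_coords_def omega3_orbit_coords_def
      omega4_orbit_coords_def)

definition separating_test ::
    "(int \<Rightarrow> int \<Rightarrow> int \<Rightarrow> int \<Rightarrow> int) \<Rightarrow> int \<Rightarrow> int \<Rightarrow> int \<Rightarrow> int \<Rightarrow> int \<Rightarrow> bool" where
  "separating_test P m t1 t2 t3 t4 \<longleftrightarrow>
     (\<forall>a\<in>{0..<4}. \<forall>b\<in>{0..<4}. \<forall>c\<in>{0..<4}. \<forall>d\<in>{0..<4}.
        orbit_defect P omega1_orbit_coords a b c d mod m = t1 mod m \<and>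
        orbit_defect P omega2_orbit_coords a b c d mod m = t2 mod m \<and>
        orbit_defect P omega3_orbit_coords a b c d mod m = t3 mod m \<and>
        orbit_defect P omega4_orbit_coords a b c d mod m = t4 mod m \<and>
        (even (a + c) \<and> even (c + d) \<longrightarrow> P a b c d mod m = 0))"

lemma separating_test_coeff_sums_mod:
  fixes f1 f2 f3 f4 :: "wt \<Rightarrow>\<^sub>0 int"
  assumes test: "separating_test P m t1 t2 t3 t4"
    and "f1 \<in> group_ring_on D4_lattice" "f2 \<in> group_ring_on D4_lattice"
      "f3 \<in> group_ring_on D4_lattice" "f4 \<in> group_ring_on D4_lattice"
    and "f1 * rho omega1 + f2 * rho omega2 + f3 * rho omega3 + f4 * rho omega4 \<in> group_ring_on T_star"
  shows "(t1 * coeff_sum f1 + t2 * coeff_sum f2 + t3 * coeff_sum f3 + t4 * coeff_sum f4) mod m = 0"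
proof -
  let ?pair = "coeff_pairing (residue_test P)"
  note checks = test[unfolded separating_test_def, rule_format]
  note orbit = coeff_pairing_residue_test_mult_rho_mod
  have "?pair (f1 * rho omega1) mod m = t1 * coeff_sum f1 mod m"
    by (rule orbit[OF assms(2) W_orbit_omega1])
      (simp_all add: fw_coords_orbits distinct_orbit_coords checks)
  moreover have "?pair (f2 * rho omega2) mod m = t2 * coeff_sum f2 mod m"
    by (rule orbit[OF assms(3) W_orbit_omega2])
      (simp_all add: fw_coords_orbits distinct_orbit_coords checks)
  moreover have "?pair (f3 * rho omega3) mod m = t3 * coeff_sum f3 mod m"
    by (rule orbit[OF assms(4) W_orbit_omega3])
      (simp_all add: fw_coords_orbits distinct_orbit_coords checks)
  moreover have "?pair (f4 * rho omega4) mod m = t4 * coeff_sum f4 mod m"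
    by (rule orbit[OF assms(5) W_orbit_omega4])
      (simp_all add: fw_coords_orbits distinct_orbit_coords checks)
  moreover have "?pair (f1 * rho omega1 + f2 * rho omega2 + f3 * rho omega3 + f4 * rho omega4) mod m = 0"
    by (rule coeff_pairing_residue_test_T_star_mod[OF assms(6)]) (simp add: checks)
  ultimately show ?thesis
    by (simp add: coeff_pairing_add) (metis mod_add_eq)
qed

text \<open>These polynomials were found by a computer search.\<close>

definition test_poly1 :: "int \<Rightarrow> int \<Rightarrow> int \<Rightarrow> int \<Rightarrow> int" where
  "test_poly1 a b c d = 4*d + 2*d^2 + 6*d^3 + 3*c^2*d^2 + 6*a + 4*a*d + 2*a*d^2 + a^2 + 2*a^2*d
     + a^2*d^2 + a^2*c^2"

definition test_poly3 :: "int \<Rightarrow> int \<Rightarrow> int \<Rightarrow> int \<Rightarrow> int" where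
  "test_poly3 a b c d = 8*d + 4*d^2 + 2*d^3 + 6*c + 4*c*d + 2*c*d^2 + c^2 + 2*c^2*d + c^2*d^2
     + 4*b*d^2 + 4*b*d^3 + 4*a*b*d + 4*a*b*d^2 + a^2*d^2 + a^2*c^2"

definition test_poly4 :: "int \<Rightarrow> int \<Rightarrow> int \<Rightarrow> int \<Rightarrow> int" where
  "test_poly4 a b c d = 2*d + 7*d^2 + 2*d^3 + 3*c^2*d^2 + 4*b*d^2 + 4*b*d^3 + 4*a*b*d + 4*a*b*d^2
     + a^2*d^2 + a^2*c^2"

lemma int_residues_4: "{0..<4 :: int} = set [0, 1, 2, 3]"
  by auto

lemma separating_test_poly1: "separating_test test_poly1 16 8 0 0 0"
  unfolding separating_test_def int_residues_4 by code_simp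

lemma separating_test_poly3: "separating_test test_poly3 16 0 0 8 0"
  unfolding separating_test_def int_residues_4 by code_simp

lemma separating_test_poly4: "separating_test test_poly4 16 0 0 0 8"
  unfolding separating_test_def int_residues_4 by code_simp

theorem proposition10p3:
  fixes f1 f2 f3 f4 :: "wt \<Rightarrow>\<^sub>0 int"
  assumes "f1 \<in> group_ring_on D4_lattice" "f2 \<in> group_ring_on D4_lattice"
    "f3 \<in> group_ring_on D4_lattice" "f4 \<in> group_ring_on D4_lattice"
  assumes "f1 * rho omega1 + f2 * rho omega2 + f3 * rho omega3 + f4 * rho omega4
             \<in> group_ring_on T_star"
  shows "even (coeff_sum f1) \<and> even (coeff_sum f3) \<and> even (coeff_sum f4)"
proof -
  have "8 * coeff_sum f1 mod 16 = 0"
    using separating_test_coeff_sums_mod[OF separating_test_poly1 assms] by simp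
  moreover have "8 * coeff_sum f3 mod 16 = 0"
    using separating_test_coeff_sums_mod[OF separating_test_poly3 assms] by simp
  moreover have "8 * coeff_sum f4 mod 16 = 0"
    using separating_test_coeff_sums_mod[OF separating_test_poly4 assms] by simp
  ultimately show ?thesis
    by presburger
qed

end
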